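(* Let $q\ge 2$ be a prime power, $m\ge1$, $n=q^m-1=r_1r_2$ with $r_1,r_2>1$, $\gcd(r_1,r_2)=1$, and let $a$ be the multiplicative order of $q$ modulo $r_1$. Fix a generator $\alpha$ of $\mathbb{F}_{q^m}^*$ and a group isomorphism $T:\mathbb{Z}_n\to\mathbb{Z}_{r_1}\times\mathbb{Z}_{r_2}$, and let $\Gamma=\{(i_1,i_2)\in\mathbb{Z}_{r_1}\times\mathbb{Z}_{r_2}\mid 0\le i_1<a,\ 0\le i_2<m/a\}$. Then the set $\{0\}\cup\{\alpha^i\mid i\in T^{-1}(\Gamma)\}\subseteq\mathbb{F}_{q^m}$ is an information set for $R_q(1,m)$, and the set $\{\alpha^i\mid i\in\mathbb{Z}_n,\ i\notin T^{-1}(\Gamma)\}$ is an information set for $R_q(m(q-1)-2,m)$.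
   Context: $\mathbb{F}=\mathbb{F}_q$; elements of $\mathbb{Z}_r$ are identified with integers $0,\dots,r-1$. The $q$-weight $\mathrm{wt}_q(k)$ of a natural number $k$ is the sum of its digits in base $q$. Let $G$ be the additive group of $\mathbb{F}_{q^m}$; words of length $q^m$ are vectors in $\mathbb{F}^G$, written $bX^0+\sum_{i=0}^{n-1}a_iX^{\alpha^i}$ (coordinates indexed by $0$ and by $\alpha^i$, $0\le i<n$). For $0<\rho\le m(q-1)$, the generalized Reed–Muller code $R_q(\rho,m)$ consists of the words with $b\cdot0^s+\sum_{i}a_i\alpha^{is}=0$ for every $0\le s<q^m-1$ with $\mathrm{wt}_q(s)<m(q-1)-\rho$ (with $0^0=1$). For a linear code $C$ of dimension $k$ on coordinate set $P$, an information set is $I\subseteq P$ with $|I|=k$ such that projection of $C$ onto $I$ is onto $\mathbb{F}^k$. *)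

theory Defs
  imports "HOL-Number_Theory.Number_Theory"
begin

text \<open>q-weight: the sum of the base-q digits of k (digits at positions j <= k suffice, since q^j > k for j > k when q >= 2).\<close>
definition qwt :: "nat \<Rightarrow> nat \<Rightarrow> nat" where
  "qwt q k = (\<Sum>j\<le>k. (k div q ^ j) mod q)"

definition subfield_Fq :: "nat \<Rightarrow> 'b::field set" where
  "subfield_Fq q = {x. x ^ q = x}"

definition words :: "nat \<Rightarrow> ('b::{finite,field} \<Rightarrow> 'b) set" where
  "words q = {c. \<forall>x. c x \<in> subfield_Fq q}"

text \<open>With the coordinate indexed by 0 carrying b and
  the coordinate indexed by alpha^i carrying a_i, the check sum b 0^s + sum_i a_i alpha^(i s) is the
  sum over all coordinates x of c(x) x^s (note 0^0 = 1 in Isabelle).\<close>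
definition rm_code :: "nat \<Rightarrow> nat \<Rightarrow> nat \<Rightarrow> ('b::{finite,field} \<Rightarrow> 'b) set" where
  "rm_code q m \<rho> = {c \<in> words q. \<forall>s. s < q ^ m - 1 \<and> qwt q s < m * (q - 1) - \<rho> \<longrightarrow>
      (\<Sum>x\<in>UNIV. c x * x ^ s) = 0}"

definition lin_indep_over :: "'b::field set \<Rightarrow> ('a \<Rightarrow> 'b) set \<Rightarrow> bool" where
  "lin_indep_over K S \<longleftrightarrow> (\<forall>g. (\<forall>v\<in>S. g v \<in> K) \<longrightarrow>
      (\<forall>x. (\<Sum>v\<in>S. g v * v x) = 0) \<longrightarrow> (\<forall>v\<in>S. g v = 0))"

definition code_dim :: "'b::field set \<Rightarrow> ('a \<Rightarrow> 'b) set \<Rightarrow> nat" where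
  "code_dim K C = Max {card S | S. S \<subseteq> C \<and> finite S \<and> lin_indep_over K S}"

definition info_set :: "'b::field set \<Rightarrow> ('a \<Rightarrow> 'b) set \<Rightarrow> 'a set \<Rightarrow> bool" where
  "info_set K C I \<longleftrightarrow> card I = code_dim K C \<and>
      (\<forall>f. (\<forall>x\<in>I. f x \<in> K) \<longrightarrow> (\<exists>c\<in>C. \<forall>x\<in>I. c x = f x))"

end

(*
  A check sum with exponent s is imposed on R_q(1,m) unless wt_q(s) >= m(q-1) - 1, i.e. unless
  s = q^m - 1 - q^j.  Fourier inversion over the multiplicative group then shows that the words of
  R_q(1,m) are the affine q-linearised maps y |-> c + sum_j d_j y^(q^j), among them the affine
  trace forms c + Tr(delta y); R_q(m(q-1)-2,m) is cut out by the two equations sum_x c_x = 0 and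
  sum_x c_x x = 0.  Consequently, for every F_q-basis B of F_(q^m), the set {0} u B is an
  information set for R_q(1,m) (by nondegeneracy of the trace form) and its complement is one for
  R_q(m(q-1)-2,m).

  It remains to show that B = {gamma1^i1 gamma2^i2 | i1 < a, i2 < m/a} is such a basis, where
  gamma1 = alpha^(T^-1(1,0)) and gamma2 = alpha^(T^-1(0,1)) have orders r1 and r2.  Applying the
  Frobenius maps x |-> x^(q^(a k)) to an F_q-linear relation gives a Vandermonde system in the
  distinct conjugates gamma2^(q^(a k)), k < m/a, which kills the inner sums over i1; applying
  x |-> x^(q^k), k < a, to those gives a Vandermonde system in the conjugates gamma1^(q^k).
*)
theory Submission
  imports Defs "HOL-Computational_Algebra.Polynomial"
begin

section \<open>Digit sums\<close>

lemma less_power_self: "(q::nat) \<ge> 2 \<Longrightarrow> k < q ^ k"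
  by (rule less_le_trans[OF less_exp power_mono]) simp_all

lemma qwt_conv_digit_sum:
  assumes "q \<ge> 2" "k < q ^ N"
  shows "qwt q k = (\<Sum>j<N. (k div q ^ j) mod q)"
proof -
  have vanish: "(k div q ^ j) mod q = 0" if "j \<ge> k \<or> j \<ge> N" for j
  proof -
    have "q ^ k \<le> q ^ j \<or> q ^ N \<le> q ^ j"
      using that assms(1) by (auto intro: power_increasing)
    hence "k < q ^ j" using assms less_power_self[OF assms(1), of k] by linarith
    thus ?thesis by simp
  qed
  let ?M = "max N (Suc k)"
  have "qwt q k = (\<Sum>j<?M. (k div q ^ j) mod q)"
    unfolding qwt_def by (rule sum.mono_neutral_left) (auto simp: vanish)
  also have "\<dots> = (\<Sum>j<N. (k div q ^ j) mod q)"
    by (rule sum.mono_neutral_right) (auto simp: vanish)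
  finally show ?thesis .
qed

lemma qwt_0 [simp]: "qwt q 0 = 0"
  by (simp add: qwt_def)

lemma qwt_rec:
  assumes "q \<ge> 2"
  shows "qwt q k = k mod q + qwt q (k div q)"
proof -
  have k: "k < q ^ Suc k"
    using less_power_self[OF assms, of k] assms by (simp add: less_le_trans)
  hence "k div q < q ^ k"
    using assms by (simp add: div_less_iff_less_mult mult.commute)
  have "qwt q k = (\<Sum>j<Suc k. (k div q ^ j) mod q)"
    by (rule qwt_conv_digit_sum[OF assms k])
  also have "\<dots> = k mod q + (\<Sum>j<k. (k div q div q ^ j) mod q)"
    by (simp only: sum.lessThan_Suc_shift) (simp add: div_mult2_eq)
  also have "(\<Sum>j<k. (k div q div q ^ j) mod q) = qwt q (k div q)"
    by (rule qwt_conv_digit_sum[OF assms \<open>k div q < q ^ k\<close>, symmetric])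
  finally show ?thesis .
qed

lemma qwt_digit_cons:
  assumes "q \<ge> 2" "d < q"
  shows "qwt q (d + q * k) = d + qwt q k"
  using qwt_rec[OF assms(1), of "d + q * k"] assms by simp

lemma qwt_complement:
  assumes "q \<ge> 2" "k < q ^ m"
  shows "qwt q (q ^ m - 1 - k) + qwt q k = m * (q - 1)"
  using assms(2)
proof (induction m arbitrary: k)
  case 0
  thus ?case by simp
next
  case (Suc m)
  define d k' where "d = k mod q" and "k' = k div q"
  have d: "d < q" and k: "k = d + q * k'"
    using assms(1) by (simp_all add: d_def k'_def)
  have "k' < q ^ m"
    using Suc.prems assms(1) by (simp add: k'_def div_less_iff_less_mult mult.commute)
  have complement: "q ^ Suc m - 1 - k = (q - 1 - d) + q * (q ^ m - 1 - k')"
  proof -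
    have "q * Suc k' \<le> q ^ Suc m"
      using mult_le_mono2[of "Suc k'" "q ^ m" q] \<open>k' < q ^ m\<close> by simp
    moreover have "q * (q ^ m - 1 - k') = q ^ Suc m - q * Suc k'"
      by (simp add: diff_mult_distrib2)
    ultimately show ?thesis using d unfolding k by simp
  qed
  have "qwt q (q ^ Suc m - 1 - k) = (q - 1 - d) + qwt q (q ^ m - 1 - k')"
    unfolding complement using assms(1) d by (intro qwt_digit_cons) auto
  moreover have "qwt q k = d + qwt q k'"
    unfolding k using assms(1) d by (rule qwt_digit_cons)
  ultimately show ?case
    using Suc.IH[OF \<open>k' < q ^ m\<close>] d by simp
qed

lemma qwt_power:
  assumes "q \<ge> 2"
  shows "qwt q (q ^ j) = 1"
proof (induction j)
  case 0
  thus ?case using qwt_rec[OF assms, of 1] assms by simp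
next
  case (Suc j)
  thus ?case using qwt_rec[OF assms, of "q ^ Suc j"] assms by simp
qed

lemma qwt_eq_0_imp:
  assumes "q \<ge> 2" "qwt q k = 0"
  shows "k = 0"
  using assms(2)
proof (induction k rule: less_induct)
  case (less k)
  show ?case
  proof (rule ccontr)
    assume "k \<noteq> 0"
    hence "k div q < k" using assms(1) by simp
    moreover have "k mod q = 0" "qwt q (k div q) = 0"
      using less.prems qwt_rec[OF assms(1), of k] by simp_all
    ultimately have "k div q = 0" "k mod q = 0" using less.IH by blast+
    thus False using \<open>k \<noteq> 0\<close> div_mult_mod_eq[of k q] by simp
  qed
qed

lemma qwt_less_2_cases:
  assumes "q \<ge> 2" "qwt q k < 2"
  shows "k = 0 \<or> (\<exists>j. k = q ^ j)"
  using assms(2)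
proof (induction k rule: less_induct)
  case (less k)
  show ?case
  proof (cases "k = 0")
    case False
    have k: "k = k mod q + q * (k div q)" and "k div q < k"
      using False assms(1) by simp_all
    have w: "qwt q k = k mod q + qwt q (k div q)" by (rule qwt_rec[OF assms(1)])
    show ?thesis
    proof (cases "k mod q = 0")
      case True
      hence "k div q = 0 \<or> (\<exists>j. k div q = q ^ j)"
        using less.IH[OF \<open>k div q < k\<close>] less.prems w by simp
      thus ?thesis using k True False by (auto simp flip: power_Suc)
    next
      case False
      hence "k mod q = 1" "qwt q (k div q) = 0" using less.prems w by simp_all
      hence "k = q ^ 0" using k qwt_eq_0_imp[OF assms(1), of "k div q"] by simp
      thus ?thesis by blast
    qed
  qed simp
qed

lemma qwt_near_max_iff:
  assumes "q \<ge> 2" "s < q ^ m - 1"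
  shows "m * (q - 1) - 1 \<le> qwt q s \<longleftrightarrow> (\<exists>j<m. s = q ^ m - 1 - q ^ j)"
proof
  assume "m * (q - 1) - 1 \<le> qwt q s"
  hence "qwt q (q ^ m - 1 - s) < 2"
    using qwt_complement[OF assms(1), of s m] assms(2) by linarith
  hence "q ^ m - 1 - s = 0 \<or> (\<exists>j. q ^ m - 1 - s = q ^ j)"
    by (rule qwt_less_2_cases[OF assms(1)])
  then obtain j where j: "q ^ m - 1 - s = q ^ j"
    using assms(2) by auto
  hence "q ^ j < q ^ m" using assms(2) by linarith
  hence "j < m" using assms(1) by simp
  moreover have "s = q ^ m - 1 - q ^ j" using j assms(2) by linarith
  ultimately show "\<exists>j<m. s = q ^ m - 1 - q ^ j" by blast
next
  assume "\<exists>j<m. s = q ^ m - 1 - q ^ j"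
  then obtain j where "j < m" "s = q ^ m - 1 - q ^ j" by blast
  moreover have "q ^ j < q ^ m" using \<open>j < m\<close> assms(1) by simp
  ultimately show "m * (q - 1) - 1 \<le> qwt q s"
    using qwt_complement[OF assms(1), of "q ^ j" m] qwt_power[OF assms(1), of j] by simp
qed

section \<open>Linear algebra over a subfield\<close>

definition is_subfield :: "'b::field set \<Rightarrow> bool" where
  "is_subfield K \<longleftrightarrow> 0 \<in> K \<and> 1 \<in> K \<and>
     (\<forall>x\<in>K. \<forall>y\<in>K. x + y \<in> K \<and> x - y \<in> K \<and> x * y \<in> K \<and> x / y \<in> K)"

lemma subfield_sum_closed:
  "is_subfield K \<Longrightarrow> (\<And>i. i \<in> A \<Longrightarrow> f i \<in> K) \<Longrightarrow> sum f A \<in> K"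
  by (induction A rule: infinite_finite_induct) (auto simp: is_subfield_def)

lemma card_less_imp_nontrivial_relation:
  fixes K :: "'b::field set" and v :: "'s \<Rightarrow> 'a \<Rightarrow> 'b"
  assumes K: "is_subfield K" "finite K" and "finite I" "finite S" "card I < card S"
    and v: "\<forall>s\<in>S. \<forall>y\<in>I. v s y \<in> K"
  shows "\<exists>g. (\<forall>s\<in>S. g s \<in> K) \<and> (\<exists>s\<in>S. g s \<noteq> 0) \<and> (\<forall>y\<in>I. (\<Sum>s\<in>S. g s * v s y) = 0)"
proof -
  \<comment> \<open>pigeonhole: \<open>g \<mapsto> (\<Sum>s\<in>S. g s * v s y)\<^sub>y\<close> maps \<open>K\<^bsup>S\<^esup>\<close> into the smaller set \<open>K\<^sup>I\<close>\<close>
  define L where "L g = (\<lambda>y\<in>I. \<Sum>s\<in>S. g s * v s y)" for g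
  have image: "L ` (S \<rightarrow>\<^sub>E K) \<subseteq> I \<rightarrow>\<^sub>E K"
    using v K(1) unfolding L_def is_subfield_def by (auto simp: PiE_iff intro!: subfield_sum_closed[OF K(1)])
  have "2 \<le> card K"
  proof -
    have "{0, 1} \<subseteq> K" using K(1) by (simp add: is_subfield_def)
    hence "card {0::'b, 1} \<le> card K" using K(2) by (rule card_mono[rotated])
    thus ?thesis by simp
  qed
  hence less: "card (I \<rightarrow>\<^sub>E K) < card (S \<rightarrow>\<^sub>E K)"
    using \<open>card I < card S\<close> \<open>finite I\<close> \<open>finite S\<close> by (simp add: card_PiE power_strict_increasing)
  have "\<not> inj_on L (S \<rightarrow>\<^sub>E K)"
  proof
    assume "inj_on L (S \<rightarrow>\<^sub>E K)"
    hence "card (S \<rightarrow>\<^sub>E K) \<le> card (I \<rightarrow>\<^sub>E K)"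
      using image by (rule card_inj_on_le) (simp add: finite_PiE \<open>finite I\<close> K(2))
    thus False using less by simp
  qed
  then obtain g g' where g: "g \<in> S \<rightarrow>\<^sub>E K" "g' \<in> S \<rightarrow>\<^sub>E K" "g \<noteq> g'" "L g = L g'"
    unfolding inj_on_def by blast
  have "(\<Sum>s\<in>S. (g s - g' s) * v s y) = 0" if "y \<in> I" for y
    using fun_cong[OF g(4), of y] that by (simp add: L_def left_diff_distrib sum_subtractf)
  moreover have "\<exists>s\<in>S. g s - g' s \<noteq> 0"
  proof (rule ccontr)
    assume "\<not> (\<exists>s\<in>S. g s - g' s \<noteq> 0)"
    hence "g = g'" using g(1,2) by (intro PiE_ext) auto
    thus False using g(3) by simp
  qed
  moreover have "\<forall>s\<in>S. g s - g' s \<in> K"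
    using g(1,2) K(1) unfolding is_subfield_def by auto
  ultimately show ?thesis by (intro exI[of _ "\<lambda>s. g s - g' s"]) blast
qed

lemma lin_indep_card_le:
  fixes C :: "('a \<Rightarrow> 'b::field) set"
  assumes K: "is_subfield K" "finite K" and "finite I"
    and lin_closed: "\<And>S g. finite S \<Longrightarrow> S \<subseteq> C \<Longrightarrow> (\<forall>v\<in>S. g v \<in> K) \<Longrightarrow>
                      (\<lambda>x. \<Sum>v\<in>S. g v * v x) \<in> C"
    and coords_in_K: "\<And>c x. c \<in> C \<Longrightarrow> x \<in> I \<Longrightarrow> c x \<in> K"
    and proj_inj: "\<And>c. c \<in> C \<Longrightarrow> (\<forall>x\<in>I. c x = 0) \<Longrightarrow> \<forall>x. c x = 0"
    and S: "S \<subseteq> C" "finite S" "lin_indep_over K S"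
  shows "card S \<le> card I"
proof (rule ccontr)
  assume "\<not> card S \<le> card I"
  moreover have "\<forall>s\<in>S. \<forall>y\<in>I. s y \<in> K" using coords_in_K S(1) by auto
  ultimately obtain g where
    g: "\<forall>s\<in>S. g s \<in> K" "\<exists>s\<in>S. g s \<noteq> 0" "\<forall>y\<in>I. (\<Sum>s\<in>S. g s * s y) = 0"
    using card_less_imp_nontrivial_relation[OF K \<open>finite I\<close> S(2), of "\<lambda>s y. s y"] by auto
  have "(\<lambda>x. \<Sum>v\<in>S. g v * v x) \<in> C" using lin_closed S g(1) by blast
  with g(3) have "\<forall>x. (\<Sum>v\<in>S. g v * v x) = 0" using proj_inj by blast
  hence "\<forall>v\<in>S. g v = 0" using S(3) g(1) unfolding lin_indep_over_def by blast
  thus False using g(2) by blast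
qed

lemma info_setI:
  fixes C :: "('a \<Rightarrow> 'b::field) set"
  assumes K: "is_subfield K" "finite K" and "finite I"
    and lin_closed: "\<And>S g. finite S \<Longrightarrow> S \<subseteq> C \<Longrightarrow> (\<forall>v\<in>S. g v \<in> K) \<Longrightarrow>
                      (\<lambda>x. \<Sum>v\<in>S. g v * v x) \<in> C"
    and coords_in_K: "\<And>c x. c \<in> C \<Longrightarrow> x \<in> I \<Longrightarrow> c x \<in> K"
    and proj_surj: "\<And>f. (\<forall>x\<in>I. f x \<in> K) \<Longrightarrow> \<exists>c\<in>C. \<forall>x\<in>I. c x = f x"
    and proj_inj: "\<And>c. c \<in> C \<Longrightarrow> (\<forall>x\<in>I. c x = 0) \<Longrightarrow> \<forall>x. c x = 0"
  shows "info_set K C I"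
proof -
  define M where "M = {card S | S. S \<subseteq> C \<and> finite S \<and> lin_indep_over K S}"
  have le: "card S \<le> card I" if "S \<subseteq> C" "finite S" "lin_indep_over K S" for S
    using lin_closed coords_in_K proj_inj that by (rule lin_indep_card_le[OF K \<open>finite I\<close>])
  obtain e where e: "\<And>x. x \<in> I \<Longrightarrow> e x \<in> C"
    "\<And>x y. x \<in> I \<Longrightarrow> y \<in> I \<Longrightarrow> e x y = (if y = x then 1 else 0)"
    using proj_surj[of "\<lambda>y. if y = _ then 1 else 0"] K(1) unfolding is_subfield_def by metis
  have inj_e: "inj_on e I"
    by (rule inj_onI) (metis e(2) zero_neq_one)
  have "lin_indep_over K (e ` I)"
    unfolding lin_indep_over_def
  proof (intro allI impI ballI)
    fix g v assume z: "\<forall>x. (\<Sum>v\<in>e ` I. g v * v x) = 0" and "v \<in> e ` I"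
    then obtain x where x: "x \<in> I" "v = e x" by blast
    have "0 = (\<Sum>x'\<in>I. g (e x') * e x' x)"
      using z by (simp add: sum.reindex[OF inj_e])
    also have "\<dots> = (\<Sum>x'\<in>I. if x' = x then g (e x) else 0)"
      by (rule sum.cong) (use e(2) x(1) in auto)
    also have "\<dots> = g v" using x \<open>finite I\<close> by simp
    finally show "g v = 0" ..
  qed
  hence "card I \<in> M"
    unfolding M_def using e(1) \<open>finite I\<close> card_image[OF inj_e] by (intro CollectI exI[of _ "e ` I"]) auto
  moreover have bound: "\<forall>k\<in>M. k \<le> card I"
    using le by (auto simp: M_def)
  moreover have "finite M"
    using bound by (auto intro: finite_subset[of _ "{..card I}"])
  ultimately have "code_dim K C = card I"
    unfolding code_dim_def M_def[symmetric] by (intro Max_eqI) auto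
  thus ?thesis unfolding info_set_def using proj_surj by simp
qed

lemma vandermonde_zero:
  fixes c z :: "nat \<Rightarrow> 'b::field"
  assumes inj: "inj_on z {..<d}" and zero: "\<forall>k<d. (\<Sum>j<d. c j * z k ^ j) = 0"
  shows "\<forall>j<d. c j = 0"
proof -
  define P where "P = (\<Sum>j<d. monom (c j) j)"
  have coeff_P: "coeff P j = (if j < d then c j else 0)" for j
    by (simp add: P_def coeff_sum)
  have "P = 0"
  proof (rule ccontr)
    assume "P \<noteq> 0"
    hence "d > 0" by (rule_tac ccontr) (simp add: P_def)
    have "degree P \<le> d - 1"
      by (rule degree_le) (use \<open>d > 0\<close> in \<open>auto simp: coeff_P\<close>)
    have "z ` {..<d} \<subseteq> {x. poly P x = 0}"
      using zero by (auto simp: P_def poly_sum poly_monom)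
    hence "card (z ` {..<d}) \<le> card {x. poly P x = 0}"
      by (intro card_mono poly_roots_finite \<open>P \<noteq> 0\<close>)
    also have "\<dots> \<le> degree P" by (rule card_poly_roots_bound[OF \<open>P \<noteq> 0\<close>])
    finally show False using card_image[OF inj] \<open>degree P \<le> d - 1\<close> \<open>d > 0\<close> by simp
  qed
  thus ?thesis using coeff_P by (metis coeff_0)
qed

section \<open>The field with a primitive element and its subfield\<close>

locale field_with_primitive_element =
  fixes q m n :: nat and \<alpha> :: "'b::{finite,field}"
  assumes q_prime_power: "\<exists>p e. prime p \<and> e \<ge> 1 \<and> q = p ^ e"
    and card_UNIV: "card (UNIV :: 'b set) = q ^ m"
    and n_def: "n = q ^ m - 1"
    and n_gt_1: "n > 1"
    and alpha_nonzero: "\<alpha> \<noteq> 0"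
    and alpha_generates: "\<forall>x::'b. x \<noteq> 0 \<longrightarrow> (\<exists>i. x = \<alpha> ^ i)"
begin

lemma q_ge_2: "q \<ge> 2"
proof -
  obtain p e where "prime p" "e \<ge> 1" "q = p ^ e" using q_prime_power by blast
  thus ?thesis using prime_ge_2_nat[of p] power_increasing[of 1 e p] by simp
qed

lemma m_pos: "m > 0"
  using n_def n_gt_1 by (cases m) auto

lemma Suc_n: "Suc n = q ^ m"
  using n_def q_ge_2 by simp

lemma q_power_le_n: "j < m \<Longrightarrow> q ^ j \<le> n"
proof -
  assume "j < m"
  hence "q ^ j < q ^ m" using q_ge_2 by simp
  thus ?thesis using Suc_n by simp
qed

lemma prime_CHAR: "prime CHAR('b)"
  by (intro prime_CHAR_semidom finite_imp_CHAR_pos) simp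

lemma q_power_eq_CHAR_power: "\<exists>e. q ^ k = CHAR('b) ^ e"
proof -
  obtain p e where p: "prime p" "q = p ^ e" using q_prime_power by blast
  have "CHAR('b) dvd p ^ (e * m)"
    using CHAR_dvd_CARD[where 'a='b] card_UNIV p(2) by (simp add: power_mult)
  hence "CHAR('b) dvd p"
    by (rule prime_dvd_power[OF prime_CHAR])
  hence "CHAR('b) = p"
    by (rule primes_dvd_imp_eq[OF prime_CHAR p(1)])
  thus ?thesis using p(2) by (intro exI[of _ "e * k"]) (simp add: power_mult)
qed

lemma frobenius_sum: "(sum f A :: 'b) ^ (q ^ k) = (\<Sum>i\<in>A. f i ^ (q ^ k))"
proof -
  obtain e where "q ^ k = CHAR('b) ^ e" using q_power_eq_CHAR_power by blast
  thus ?thesis by (rule freshmans_dream_sum'[OF prime_CHAR])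
qed

lemma frobenius_add: "((x::'b) + y) ^ (q ^ k) = x ^ (q ^ k) + y ^ (q ^ k)"
proof -
  obtain e where "q ^ k = CHAR('b) ^ e" using q_power_eq_CHAR_power by blast
  thus ?thesis by (rule freshmans_dream'[OF prime_CHAR])
qed

lemma frobenius_diff: "((x::'b) - y) ^ (q ^ k) = x ^ (q ^ k) - y ^ (q ^ k)"
  using frobenius_add[of "x - y" y k] by (simp add: algebra_simps)

lemma frobenius_sum_mult:
  "(\<Sum>i\<in>A. (f i :: 'b) * g i) ^ (q ^ k) = (\<Sum>i\<in>A. f i ^ (q ^ k) * g i ^ (q ^ k))"
  by (simp add: frobenius_sum power_mult_distrib)

lemma of_nat_n: "of_nat n = (- 1 :: 'b)"
proof -
  have "of_nat (card (UNIV :: 'b set)) = (0 :: 'b)"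
    using CHAR_dvd_CARD of_nat_eq_0_iff_char_dvd by blast
  hence "of_nat n + 1 = (0 :: 'b)"
    using card_UNIV Suc_n by (metis of_nat_Suc add.commute)
  thus ?thesis by (simp add: eq_neg_iff_add_eq_0)
qed

lemma nonzero_power_n: "(x::'b) \<noteq> 0 \<Longrightarrow> x ^ n = 1"
proof -
  assume "x \<noteq> 0"
  let ?S = "UNIV - {0::'b}"
  have "card ?S = n" using card_UNIV n_def by (simp add: card_Diff_singleton)
  have "1 * \<Prod>?S = (\<Prod>y\<in>?S. x * y)"
    by (simp, rule prod.reindex_bij_witness[of _ "\<lambda>y. x * y" "\<lambda>y. y / x"])
      (use \<open>x \<noteq> 0\<close> in auto)
  also have "\<dots> = x ^ n * \<Prod>?S"
    using \<open>card ?S = n\<close> by (simp add: prod.distrib)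
  moreover have "\<Prod>?S \<noteq> 0" by simp
  ultimately show ?thesis by (metis mult_right_cancel)
qed

lemma power_q_power_m: "(x::'b) ^ (q ^ m) = x"
  using nonzero_power_n[of x] Suc_n[symmetric] by (cases "x = 0") auto

lemma alpha_power_mod: "\<alpha> ^ (k mod n) = \<alpha> ^ k"
proof -
  have "\<alpha> ^ k = (\<alpha> ^ n) ^ (k div n) * \<alpha> ^ (k mod n)"
    by (simp flip: power_mult power_add)
  thus ?thesis using nonzero_power_n[OF alpha_nonzero] by simp
qed

lemma alpha_power_eq_1_iff: "\<alpha> ^ k = 1 \<longleftrightarrow> n dvd k"
proof
  assume "\<alpha> ^ k = 1"
  show "n dvd k"
  proof (rule ccontr)
    assume "\<not> n dvd k"
    define d where "d = k mod n"
    have "0 < d" "d < n"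
      using \<open>\<not> n dvd k\<close> n_gt_1 by (auto simp: d_def dvd_eq_mod_eq_0)
    have "\<alpha> ^ d = 1" using \<open>\<alpha> ^ k = 1\<close> alpha_power_mod d_def by simp
    \<comment> \<open>then the \<open>d < n\<close> powers \<open>\<alpha>\<^sup>i\<close>, \<open>i < d\<close>, would exhaust the \<open>n\<close> nonzero elements\<close>
    have "UNIV - {0::'b} \<subseteq> (\<lambda>i. \<alpha> ^ i) ` {..<d}"
    proof
      fix x :: 'b assume "x \<in> UNIV - {0}"
      then obtain i where "x = \<alpha> ^ i" using alpha_generates by auto
      also have "\<dots> = (\<alpha> ^ d) ^ (i div d) * \<alpha> ^ (i mod d)"
        by (simp flip: power_mult power_add)
      finally show "x \<in> (\<lambda>i. \<alpha> ^ i) ` {..<d}" using \<open>\<alpha> ^ d = 1\<close> \<open>0 < d\<close> by auto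
    qed
    hence "card (UNIV - {0::'b}) \<le> card ((\<lambda>i. \<alpha> ^ i) ` {..<d})"
      by (intro card_mono) auto
    also have "\<dots> \<le> d"
      using card_image_le[of "{..<d}"] by simp
    finally show False using card_UNIV n_def \<open>d < n\<close> by (simp add: card_Diff_singleton)
  qed
next
  assume "n dvd k"
  then obtain t where "k = n * t" ..
  thus "\<alpha> ^ k = 1" by (simp add: power_mult nonzero_power_n[OF alpha_nonzero])
qed

lemma inj_on_alpha_power: "inj_on (\<lambda>k. \<alpha> ^ k) {..<n}"
proof -
  have le: "i = j" if "j < n" "i \<le> j" "\<alpha> ^ i = \<alpha> ^ j" for i j
  proof -
    have "\<alpha> ^ i * \<alpha> ^ (j - i) = \<alpha> ^ j"
      using \<open>i \<le> j\<close> by (simp flip: power_add)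
    hence "\<alpha> ^ i * \<alpha> ^ (j - i) = \<alpha> ^ i * 1"
      using that by simp
    hence "n dvd j - i" using alpha_nonzero alpha_power_eq_1_iff by simp
    moreover have "j - i < n" using that by linarith
    ultimately have "\<not> 0 < j - i" using nat_dvd_not_less by blast
    thus ?thesis using \<open>i \<le> j\<close> by simp
  qed
  show ?thesis
  proof (rule inj_onI)
    fix i j assume "i \<in> {..<n}" "j \<in> {..<n}" "\<alpha> ^ i = \<alpha> ^ j"
    thus "i = j" using le[of j i] le[of i j] by (cases "i \<le> j") auto
  qed
qed

lemma alpha_power_image: "(\<lambda>k. \<alpha> ^ k) ` {..<n} = UNIV - {0}"
proof -
  have "x \<in> (\<lambda>k. \<alpha> ^ k) ` {..<n}" if nonzero: "x \<noteq> 0" for x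
  proof -
    obtain i where "x = \<alpha> ^ i" using alpha_generates nonzero by blast
    hence "x = \<alpha> ^ (i mod n)" by (simp add: alpha_power_mod)
    thus ?thesis using n_gt_1 by auto
  qed
  thus ?thesis using alpha_nonzero by auto
qed

lemma alpha_powers_Compl:
  "{\<alpha> ^ i | i. i < n \<and> \<not> P i} = UNIV - insert 0 {\<alpha> ^ i | i. i < n \<and> P i}"
proof -
  have "x \<in> {\<alpha> ^ i | i. i < n \<and> \<not> P i} \<longleftrightarrow> x \<noteq> 0 \<and> x \<notin> {\<alpha> ^ i | i. i < n \<and> P i}" for x
    using alpha_power_image inj_onD[OF inj_on_alpha_power] by blast
  thus ?thesis by blast
qed

lemma power_sum_eq_0:
  assumes "s = 0 \<or> \<not> n dvd s"
  shows "(\<Sum>y\<in>UNIV. (y::'b) ^ s) = 0"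
proof -
  have UNIV_eq: "UNIV = insert 0 ((\<lambda>k. \<alpha> ^ k) ` {..<n})" using alpha_power_image by auto
  have "(\<Sum>y\<in>UNIV. (y::'b) ^ s) = 0 ^ s + (\<Sum>y\<in>(\<lambda>k. \<alpha> ^ k) ` {..<n}. y ^ s)"
    by (subst UNIV_eq, subst sum.insert) (auto simp: alpha_nonzero)
  also have "\<dots> = 0 ^ s + (\<Sum>k<n. (\<alpha> ^ s) ^ k)"
    by (subst sum.reindex[OF inj_on_alpha_power]) (simp flip: power_mult add: mult.commute)
  also have "\<dots> = 0"
  proof (cases "s = 0")
    case True
    have "0 ^ s + (\<Sum>k<n. (\<alpha> ^ s) ^ k) = 1 + of_nat n"
      using True by simp
    also have "\<dots> = 0" using of_nat_n by simp
    finally show ?thesis .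
  next
    case False
    hence "\<alpha> ^ s \<noteq> 1" using assms alpha_power_eq_1_iff by simp
    moreover have "(\<alpha> ^ s) ^ n = 1" by (simp add: alpha_nonzero nonzero_power_n)
    ultimately show ?thesis using False by (simp add: sum_gp_strict)
  qed
  finally show ?thesis .
qed

abbreviation Fq :: "'b set" where
  "Fq \<equiv> subfield_Fq q"

lemma mem_Fq_iff: "x \<in> Fq \<longleftrightarrow> x ^ q = x"
  by (simp add: subfield_Fq_def)

lemma Fq_power_q_power: "x \<in> Fq \<Longrightarrow> x ^ (q ^ j) = x"
  by (induction j) (simp_all add: mem_Fq_iff power_mult mult.commute[of q])

lemma is_subfield_Fq: "is_subfield Fq"
  using frobenius_add[of _ _ 1] frobenius_diff[of _ _ 1] q_ge_2
  unfolding is_subfield_def by (simp add: mem_Fq_iff power_mult_distrib power_divide)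

lemma Fq_0: "0 \<in> Fq" and Fq_1: "1 \<in> Fq"
  and Fq_add: "x \<in> Fq \<Longrightarrow> y \<in> Fq \<Longrightarrow> x + y \<in> Fq"
  and Fq_diff: "x \<in> Fq \<Longrightarrow> y \<in> Fq \<Longrightarrow> x - y \<in> Fq"
  and Fq_mult: "x \<in> Fq \<Longrightarrow> y \<in> Fq \<Longrightarrow> x * y \<in> Fq"
  and Fq_sum: "(\<And>i. i \<in> A \<Longrightarrow> f i \<in> Fq) \<Longrightarrow> sum f A \<in> Fq"
  using is_subfield_Fq subfield_sum_closed unfolding is_subfield_def by blast+

lemma Fq_uminus: "x \<in> Fq \<Longrightarrow> - x \<in> Fq"
  using Fq_diff[OF Fq_0] by simp

lemma card_Fq: "card Fq = q"
proof (rule antisym)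
  define P :: "'b poly" where "P = monom 1 q - [:0, 1:]"
  have "coeff P q = 1" using q_ge_2 by (simp add: P_def coeff_pCons split: nat.split)
  hence "P \<noteq> 0" by auto
  moreover have "degree P \<le> q" unfolding P_def using q_ge_2
    by (intro degree_diff_le) (auto simp: degree_monom_le)
  moreover have "Fq = {x. poly P x = 0}" by (auto simp: P_def poly_monom mem_Fq_iff)
  ultimately show "card Fq \<le> q" using card_poly_roots_bound[of P] by simp
next
  \<comment> \<open>the \<open>q - 1\<close> powers of \<open>\<alpha>\<^bsup>n/(q-1)\<^esup>\<close> and \<open>0\<close> lie in \<open>Fq\<close>\<close>
  have "(q - 1) dvd n"
  proof -
    have "[q ^ m = 1 ^ m] (mod (q - 1))"
      using q_ge_2 by (intro cong_pow) (simp add: cong_altdef_nat)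
    thus ?thesis using n_def cong_to_1_nat by simp
  qed
  then obtain N where N: "n = (q - 1) * N" ..
  hence "N > 0" using n_gt_1 by (cases N) auto
  let ?E = "(\<lambda>k. \<alpha> ^ (N * k)) ` {..<q - 1}"
  have "x \<in> Fq" if "x \<in> ?E" for x
  proof -
    obtain k where x: "x = \<alpha> ^ (N * k)" using \<open>x \<in> ?E\<close> by auto
    have "N * k * q = N * k + n * k"
      using N q_ge_2 by (simp add: algebra_simps)
    hence "x ^ q = x * (\<alpha> ^ n) ^ k"
      unfolding x by (simp flip: power_mult power_add)
    thus ?thesis using nonzero_power_n[OF alpha_nonzero] by (simp add: mem_Fq_iff)
  qed
  hence "insert 0 ?E \<subseteq> Fq" using Fq_0 by blast
  moreover have "inj_on (\<lambda>k. \<alpha> ^ (N * k)) {..<q - 1}"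
  proof (rule inj_onI)
    fix i j assume ij: "i \<in> {..<q - 1}" "j \<in> {..<q - 1}" "\<alpha> ^ (N * i) = \<alpha> ^ (N * j)"
    have "N * i < n" "N * j < n" using ij \<open>N > 0\<close> N by auto
    hence "N * i = N * j" using inj_onD[OF inj_on_alpha_power ij(3)] by simp
    thus "i = j" using \<open>N > 0\<close> by simp
  qed
  moreover have "0 \<notin> ?E" using alpha_nonzero by auto
  ultimately show "q \<le> card Fq"
    using card_mono[of Fq "insert 0 ?E"] card_image q_ge_2 by fastforce
qed

section \<open>Generalized Reed--Muller codes of small and large order\<close>

lemma mem_words_iff: "(c :: 'b \<Rightarrow> 'b) \<in> words q \<longleftrightarrow> (\<forall>x. c x \<in> Fq)"
  by (simp add: words_def)

lemma rm_code_in_Fq: "(c :: 'b \<Rightarrow> 'b) \<in> rm_code q m \<rho> \<Longrightarrow> c x \<in> Fq"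
  by (simp add: rm_code_def mem_words_iff)

lemma rm_code_lin_closed:
  fixes S :: "('b \<Rightarrow> 'b) set"
  assumes "S \<subseteq> rm_code q m \<rho>" "\<forall>v\<in>S. g v \<in> Fq"
  shows "(\<lambda>x. \<Sum>v\<in>S. g v * v x) \<in> rm_code q m \<rho>"
proof -
  have "(\<lambda>x. \<Sum>v\<in>S. g v * v x) \<in> words q"
    using assms rm_code_in_Fq unfolding mem_words_iff by (blast intro: Fq_sum Fq_mult)
  moreover have "(\<Sum>x\<in>UNIV. (\<Sum>v\<in>S. g v * v x) * x ^ s) = 0"
    if "s < q ^ m - 1 \<and> qwt q s < m * (q - 1) - \<rho>" for s
  proof -
    have "(\<Sum>x\<in>UNIV. (\<Sum>v\<in>S. g v * v x) * x ^ s) = (\<Sum>v\<in>S. g v * (\<Sum>x\<in>UNIV. v x * x ^ s))"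
      by (simp add: sum_distrib_right sum_distrib_left mult.assoc) (rule sum.swap)
    also have "\<dots> = 0" using assms(1) that by (auto simp: rm_code_def intro!: sum.neutral)
    finally show ?thesis .
  qed
  ultimately show ?thesis by (simp add: rm_code_def)
qed

lemma m_times_q_minus_1_ge_2: "m * (q - 1) \<ge> 2"
proof (cases "m = 1")
  case True
  thus ?thesis using n_def n_gt_1 by simp
next
  case False
  hence "m \<ge> 2" using m_pos by simp
  thus ?thesis using q_ge_2 mult_le_mono[of 2 m 1 "q - 1"] by simp
qed

lemma mem_rm_code_2_iff:
  fixes c :: "'b \<Rightarrow> 'b"
  shows "c \<in> rm_code q m (m * (q - 1) - 2) \<longleftrightarrow>
     c \<in> words q \<and> (\<Sum>x\<in>UNIV. c x) = 0 \<and> (\<Sum>x\<in>UNIV. c x * x) = 0"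
    (is "_ \<longleftrightarrow> _ \<and> ?sum0 \<and> ?sum1")
proof -
  have weight_bound: "m * (q - 1) - (m * (q - 1) - 2) = 2"
    using m_times_q_minus_1_ge_2 by simp
  have check_sum_q_power: "(\<Sum>x\<in>UNIV. c x * x ^ (q ^ j)) = (\<Sum>x\<in>UNIV. c x * x) ^ (q ^ j)"
    if "c \<in> words q" for j
  proof -
    have "(\<Sum>x\<in>UNIV. c x * x) ^ (q ^ j) = (\<Sum>x\<in>UNIV. c x ^ (q ^ j) * x ^ (q ^ j))"
      by (rule frobenius_sum_mult)
    thus ?thesis using that by (simp add: mem_words_iff Fq_power_q_power)
  qed
  have "qwt q 1 = 1" using qwt_power[OF q_ge_2, of 0] by simp
  moreover have "1 < q ^ m - 1" using n_def n_gt_1 by simp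
  ultimately have "c \<in> rm_code q m (m * (q - 1) - 2) \<Longrightarrow> ?sum0 \<and> ?sum1"
    unfolding rm_code_def weight_bound by (auto dest: spec[of _ 0] spec[of _ 1])
  moreover have "(\<Sum>x\<in>UNIV. c x * x ^ s) = 0"
    if "c \<in> words q" ?sum0 ?sum1 "qwt q s < 2" for s
    using qwt_less_2_cases[OF q_ge_2 \<open>qwt q s < 2\<close>] check_sum_q_power that q_ge_2 by auto
  ultimately show ?thesis
    unfolding rm_code_def weight_bound by blast
qed

definition trace :: "'b \<Rightarrow> 'b" where
  "trace x = (\<Sum>j<m. x ^ (q ^ j))"

lemma trace_in_Fq: "trace x \<in> Fq"
proof -
  have "trace x ^ q = (\<Sum>j<m. x ^ (q ^ Suc j))"
    using frobenius_sum[of "\<lambda>j. x ^ (q ^ j)" "{..<m}" 1]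
    by (simp add: trace_def mult.commute flip: power_mult)
  also have "\<dots> = trace x"
    using sum.lessThan_Suc_shift[of "\<lambda>j. x ^ (q ^ j)" m] power_q_power_m by (simp add: trace_def)
  finally show ?thesis by (simp add: mem_Fq_iff)
qed

lemma trace_0: "trace 0 = 0"
  using q_ge_2 by (simp add: trace_def power_0_left)

lemma trace_diff: "trace (x - y) = trace x - trace y"
  by (simp add: trace_def frobenius_diff sum_subtractf)

lemma trace_Fq_linear:
  assumes "\<And>i. i \<in> A \<Longrightarrow> g i \<in> Fq"
  shows "trace (\<Sum>i\<in>A. g i * x i) = (\<Sum>i\<in>A. g i * trace (x i))"
proof -
  have "trace (\<Sum>i\<in>A. g i * x i) = (\<Sum>j<m. \<Sum>i\<in>A. g i * x i ^ (q ^ j))"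
    unfolding trace_def using assms by (simp add: frobenius_sum_mult Fq_power_q_power)
  also have "\<dots> = (\<Sum>i\<in>A. g i * trace (x i))"
    by (subst sum.swap) (simp add: trace_def sum_distrib_left)
  finally show ?thesis .
qed

lemma affine_trace_in_rm_code_1:
  assumes "k0 \<in> Fq"
  shows "(\<lambda>y. k0 + trace (\<delta> * y)) \<in> rm_code q m 1"
proof -
  have "(\<Sum>y\<in>UNIV. (k0 + trace (\<delta> * y)) * y ^ s) = 0"
    if s: "s < q ^ m - 1" "qwt q s < m * (q - 1) - 1" for s
  proof -
    have "s < n" using s n_def by simp
    have "(\<Sum>y\<in>UNIV. (k0 + trace (\<delta> * y)) * y ^ s)
        = k0 * (\<Sum>y\<in>UNIV. y ^ s) + (\<Sum>j<m. \<delta> ^ (q ^ j) * (\<Sum>y\<in>UNIV. y ^ (q ^ j + s)))"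
      by (simp add: trace_def algebra_simps sum.distrib sum_distrib_left sum_distrib_right
          power_add sum.swap[of _ "{..<m}"])
    also have "(\<Sum>y\<in>UNIV. (y::'b) ^ s) = 0"
      using \<open>s < n\<close> by (intro power_sum_eq_0) (auto dest: nat_dvd_not_less)
    also have "(\<Sum>j<m. \<delta> ^ (q ^ j) * (\<Sum>y\<in>UNIV. y ^ (q ^ j + s))) = 0"
    proof (intro sum.neutral ballI)
      fix j assume "j \<in> {..<m}"
      hence "q ^ j \<le> n" by (simp add: q_power_le_n)
      \<comment> \<open>\<open>n\<close> can only divide \<open>q\<^sup>j + s < 2n\<close> if \<open>s = n - q\<^sup>j\<close>, whose weight is too large\<close>
      have "\<not> n dvd (q ^ j + s)"
      proof
        assume "n dvd (q ^ j + s)"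
        then obtain t where t: "q ^ j + s = n * t" ..
        moreover have "0 < q ^ j + s" "q ^ j + s < n * 2"
          using \<open>s < n\<close> \<open>q ^ j \<le> n\<close> q_ge_2 by simp_all
        ultimately have "t = 1" by (cases t) auto
        hence "q ^ j + s = n" using t by simp
        hence "m * (q - 1) - 1 \<le> qwt q s"
          using qwt_near_max_iff[OF q_ge_2] s(1) \<open>j \<in> {..<m}\<close> n_def by auto
        thus False using s(2) by simp
      qed
      thus "\<delta> ^ (q ^ j) * (\<Sum>y\<in>UNIV. y ^ (q ^ j + s)) = 0" by (simp add: power_sum_eq_0)
    qed
    finally show ?thesis by simp
  qed
  moreover have "(\<lambda>y. k0 + trace (\<delta> * y)) \<in> words q"
    using assms trace_in_Fq Fq_add by (simp add: mem_words_iff)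
  ultimately show ?thesis by (simp add: rm_code_def)
qed

lemma sum_powers_quotient:
  assumes "y \<noteq> 0"
  shows "(\<Sum>s<n. (x / y) ^ s) = (if x = 0 then 1 else if x = y then - 1 else (0::'b))"
proof -
  consider "x = 0" | "x = y" | "x \<noteq> 0" "x \<noteq> y" by blast
  thus ?thesis
  proof cases
    case 1
    thus ?thesis using n_gt_1 by (simp add: sum_gp_strict)
  next
    case 2
    thus ?thesis using assms of_nat_n by simp
  next
    case 3
    hence "x / y \<noteq> 1" "(x / y) ^ n = 1"
      using assms by (simp_all add: power_divide nonzero_power_n)
    thus ?thesis using 3 by (simp add: sum_gp_strict)
  qed
qed

lemma check_sums_inversion:
  assumes "y \<noteq> 0"
  shows "(\<Sum>s<n. (\<Sum>x\<in>UNIV. c x * x ^ s) / y ^ s) = c 0 - c (y::'b)"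
proof -
  have "(\<Sum>s<n. (\<Sum>x\<in>UNIV. c x * x ^ s) / y ^ s) = (\<Sum>x\<in>UNIV. c x * (\<Sum>s<n. (x / y) ^ s))"
    by (simp add: sum_divide_distrib sum_distrib_left power_divide mult.assoc sum.swap[of _ "{..<n}"])
  also have "\<dots> = (\<Sum>x\<in>UNIV. (if x = 0 then c 0 else 0) + (if x = y then - c y else 0))"
    by (rule sum.cong) (use assms in \<open>simp_all add: sum_powers_quotient\<close>)
  also have "\<dots> = c 0 - c y" by (simp add: sum.distrib)
  finally show ?thesis .
qed

lemma rm_code_1_linearized:
  fixes c :: "'b \<Rightarrow> 'b"
  assumes "c \<in> rm_code q m 1"
  shows "\<exists>d. \<forall>y. c y = c 0 + (\<Sum>j<m. d j * y ^ (q ^ j))"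
proof -
  define A where "A s = (\<Sum>x\<in>UNIV. c x * x ^ s)" for s
  let ?E = "(\<lambda>j. n - q ^ j) ` {..<m}"
  have A_0: "A s = 0" if "s \<in> {..<n} - ?E" for s
  proof -
    have "qwt q s < m * (q - 1) - 1"
      using that qwt_near_max_iff[OF q_ge_2, of s m] n_def by (auto simp: not_le[symmetric])
    thus ?thesis using assms that n_def unfolding rm_code_def A_def by auto
  qed
  have inj: "inj_on (\<lambda>j. n - q ^ j) {..<m}"
  proof (rule inj_onI)
    fix i j assume "i \<in> {..<m}" "j \<in> {..<m}" "n - q ^ i = n - q ^ j"
    hence "q ^ i = q ^ j" using q_power_le_n by (metis diff_diff_cancel lessThan_iff)
    thus "i = j" using q_ge_2 by simp
  qed
  \<comment> \<open>only the check sums \<open>A (n - q\<^sup>j)\<close> can be nonzero, and Fourier inversion recovers \<open>c\<close> from them\<close>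
  have "c y = c 0 + (\<Sum>j<m. - A (n - q ^ j) * y ^ (q ^ j))" if "y \<noteq> 0" for y
  proof -
    have "c 0 - c y = (\<Sum>s<n. A s / y ^ s)"
      unfolding A_def using check_sums_inversion[OF that] by simp
    also have "\<dots> = (\<Sum>s\<in>?E. A s / y ^ s)"
      using A_0 q_ge_2 n_gt_1 by (intro sum.mono_neutral_right) auto
    also have "\<dots> = (\<Sum>j<m. A (n - q ^ j) * y ^ (q ^ j))"
    proof (subst sum.reindex[OF inj], rule sum.cong)
      fix j assume "j \<in> {..<m}"
      hence "y ^ (n - q ^ j) * y ^ (q ^ j) = 1"
        using q_power_le_n nonzero_power_n[OF that] by (simp flip: power_add)
      thus "((\<lambda>s. A s / y ^ s) \<circ> (\<lambda>j. n - q ^ j)) j = A (n - q ^ j) * y ^ (q ^ j)"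
        using that by (simp add: field_simps)
    qed simp
    finally show ?thesis by (simp add: sum_negf algebra_simps)
  qed
  moreover have "(\<Sum>j<m. - A (n - q ^ j) * 0 ^ (q ^ j)) = 0"
    using q_ge_2 by (simp add: power_0_left)
  ultimately show ?thesis by (metis add_0_right)
qed

lemma trace_form_eq_0_imp:
  assumes "\<forall>y. trace (\<epsilon> * y) = 0"
  shows "\<epsilon> = 0"
proof (rule ccontr)
  assume "\<epsilon> \<noteq> 0"
  \<comment> \<open>\<open>y \<mapsto> trace (\<epsilon> * y)\<close> is a nonzero polynomial of degree \<open>q\<^bsup>m-1\<^esup> < q\<^sup>m\<close> with \<open>q\<^sup>m\<close> roots\<close>
  define P where "P = (\<Sum>j<m. monom (\<epsilon> ^ (q ^ j)) (q ^ j))"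
  have "coeff P (q ^ (m - 1)) = (\<Sum>j<m. if j = m - 1 then \<epsilon> ^ (q ^ (m - 1)) else 0)"
    unfolding P_def coeff_sum coeff_monom using q_ge_2 by (intro sum.cong) auto
  also have "\<dots> \<noteq> 0" using m_pos \<open>\<epsilon> \<noteq> 0\<close> by simp
  finally have "P \<noteq> 0" by auto
  moreover have "degree P \<le> q ^ (m - 1)" unfolding P_def
  proof (rule degree_sum_le)
    fix j assume "j \<in> {..<m}"
    hence "q ^ j \<le> q ^ (m - 1)" using q_ge_2 by (intro power_increasing) auto
    thus "degree (monom (\<epsilon> ^ (q ^ j)) (q ^ j)) \<le> q ^ (m - 1)"
      using degree_monom_le order_trans by blast
  qed simp
  moreover have "{y. poly P y = 0} = UNIV"
    using assms by (auto simp: P_def poly_sum poly_monom trace_def power_mult_distrib)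
  ultimately have "q ^ m \<le> q ^ (m - 1)" using card_poly_roots_bound[of P] card_UNIV by simp
  moreover have "q ^ (m - 1) < q ^ m" using q_ge_2 m_pos by simp
  ultimately show False by simp
qed

end

section \<open>Information sets from a basis\<close>

locale Fq_basis = field_with_primitive_element q m n \<alpha>
    for q m n :: nat and \<alpha> :: "'b::{finite,field}" +
  fixes B :: "'b set"
  assumes card_B: "card B = m"
    and B_independent: "\<And>g. (\<forall>b\<in>B. g b \<in> Fq) \<Longrightarrow> (\<Sum>b\<in>B. g b * b) = 0 \<Longrightarrow> \<forall>b\<in>B. g b = 0"
begin

lemma zero_notin_B: "0 \<notin> B"
proof
  assume "0 \<in> B"
  have "\<forall>b\<in>B. (if b = 0 then 1 else 0) = (0::'b)"
    by (rule B_independent) (auto simp: Fq_0 Fq_1 intro: sum.neutral)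
  thus False using \<open>0 \<in> B\<close> by auto
qed

lemma B_spans: "\<exists>g. (\<forall>b\<in>B. g b \<in> Fq) \<and> y = (\<Sum>b\<in>B. g b * b)"
proof -
  define comb where "comb g = (\<Sum>b\<in>B. g b * b)" for g
  have "inj_on comb (B \<rightarrow>\<^sub>E Fq)"
  proof (rule inj_onI)
    fix g g' assume g: "g \<in> B \<rightarrow>\<^sub>E Fq" "g' \<in> B \<rightarrow>\<^sub>E Fq" "comb g = comb g'"
    have "(\<Sum>b\<in>B. (g b - g' b) * b) = comb g - comb g'"
      by (simp add: comb_def left_diff_distrib sum_subtractf)
    hence "\<forall>b\<in>B. g b - g' b = 0"
      using g by (intro B_independent) (auto intro: Fq_diff)
    thus "g = g'" using g(1,2) by (intro PiE_ext) auto
  qed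
  moreover have "card (B \<rightarrow>\<^sub>E Fq) = card (UNIV :: 'b set)"
    by (simp add: card_PiE card_Fq card_B card_UNIV)
  ultimately have "comb ` (B \<rightarrow>\<^sub>E Fq) = UNIV"
    by (intro card_subset_eq) (auto simp: card_image)
  then obtain g where "g \<in> B \<rightarrow>\<^sub>E Fq" "y = comb g" by (metis UNIV_I imageE)
  thus ?thesis unfolding comb_def by auto
qed

lemma trace_dual_surj:
  assumes "\<forall>b\<in>B. f b \<in> Fq"
  shows "\<exists>\<delta>. \<forall>b\<in>B. trace (\<delta> * b) = f b"
proof -
  define \<Psi> where "\<Psi> \<delta> = restrict (\<lambda>b. trace (\<delta> * b)) B" for \<delta>
  have "inj \<Psi>"
  proof (rule injI)
    fix \<delta> \<delta>' assume eq: "\<Psi> \<delta> = \<Psi> \<delta>'"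
    have on_B: "trace ((\<delta> - \<delta>') * b) = 0" if "b \<in> B" for b
      using fun_cong[OF eq, of b] that by (simp add: \<Psi>_def left_diff_distrib trace_diff)
    have "trace ((\<delta> - \<delta>') * y) = 0" for y
    proof -
      obtain g where g: "\<forall>b\<in>B. g b \<in> Fq" "y = (\<Sum>b\<in>B. g b * b)" using B_spans by blast
      hence "trace ((\<delta> - \<delta>') * y) = (\<Sum>b\<in>B. g b * trace ((\<delta> - \<delta>') * b))"
        by (simp add: sum_distrib_left mult.left_commute trace_Fq_linear)
      thus ?thesis using on_B by simp
    qed
    hence "\<delta> - \<delta>' = 0" by (intro trace_form_eq_0_imp) simp
    thus "\<delta> = \<delta>'" by simp
  qed
  moreover have "range \<Psi> \<subseteq> B \<rightarrow>\<^sub>E Fq" by (auto simp: \<Psi>_def trace_in_Fq)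
  moreover have "card (B \<rightarrow>\<^sub>E Fq) = card (UNIV :: 'b set)"
    by (simp add: card_PiE card_Fq card_B card_UNIV)
  ultimately have "range \<Psi> = B \<rightarrow>\<^sub>E Fq"
    by (intro card_subset_eq) (auto simp: card_image finite_PiE)
  moreover have "restrict f B \<in> B \<rightarrow>\<^sub>E Fq" using assms by simp
  ultimately have "restrict f B \<in> range \<Psi>" by simp
  then obtain \<delta> where \<delta>: "restrict f B = \<Psi> \<delta>" by blast
  have "trace (\<delta> * b) = f b" if "b \<in> B" for b
    using fun_cong[OF \<delta>, of b] that by (simp add: \<Psi>_def)
  thus ?thesis by blast
qed

lemma info_set_rm_code_1: "info_set Fq (rm_code q m 1) (insert 0 B)"
proof (rule info_setI[OF is_subfield_Fq finite])
  fix f :: "'b \<Rightarrow> 'b" assume f: "\<forall>x\<in>insert 0 B. f x \<in> Fq"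
  then obtain \<delta> where \<delta>: "\<forall>b\<in>B. trace (\<delta> * b) = f b - f 0"
    using trace_dual_surj[of "\<lambda>b. f b - f 0"] Fq_diff by auto
  have "(\<lambda>y. f 0 + trace (\<delta> * y)) \<in> rm_code q m 1"
    using f by (intro affine_trace_in_rm_code_1) simp
  moreover have "\<forall>x\<in>insert 0 B. f 0 + trace (\<delta> * x) = f x"
    using \<delta> trace_0 by simp
  ultimately show "\<exists>c\<in>rm_code q m 1. \<forall>x\<in>insert 0 B. c x = f x" by (intro bexI)
next
  fix c :: "'b \<Rightarrow> 'b" assume c: "c \<in> rm_code q m 1" "\<forall>x\<in>insert 0 B. c x = 0"
  obtain d where d: "\<forall>y. c y = c 0 + (\<Sum>j<m. d j * y ^ (q ^ j))"
    using rm_code_1_linearized[OF c(1)] by blast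
  \<comment> \<open>\<open>L = c - c 0\<close> is \<open>Fq\<close>-linear and vanishes on the basis \<open>B\<close>\<close>
  define L where "L y = (\<Sum>j<m. d j * y ^ (q ^ j))" for y
  have L_B: "L b = 0" if "b \<in> B" for b
    using c(2) d[rule_format, of b] that unfolding L_def by simp
  show "\<forall>y. c y = 0"
  proof
    fix y
    obtain g where g: "\<forall>b\<in>B. g b \<in> Fq" "y = (\<Sum>b\<in>B. g b * b)" using B_spans by blast
    have "L y = (\<Sum>j<m. d j * (\<Sum>b\<in>B. g b * b ^ (q ^ j)))"
      unfolding L_def g(2) using g(1) by (simp add: frobenius_sum_mult Fq_power_q_power)
    also have "\<dots> = (\<Sum>b\<in>B. g b * L b)"
      unfolding L_def by (simp add: sum_distrib_left mult.left_commute) (rule sum.swap)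
    also have "\<dots> = 0" using L_B by simp
    finally show "c y = 0" using d[rule_format, of y] c(2) unfolding L_def by simp
  qed
qed (auto intro: rm_code_lin_closed rm_code_in_Fq)

lemma sum_UNIV_split:
  "(\<Sum>x\<in>UNIV. h x) = h 0 + (\<Sum>x\<in>B. h x) + (\<Sum>x\<in>UNIV - insert 0 B. h (x::'b))"
proof -
  have "(\<Sum>x\<in>UNIV. h x) = (\<Sum>x\<in>insert 0 B. h x) + (\<Sum>x\<in>UNIV - insert 0 B. h x)"
    by (subst sum.union_disjoint[symmetric]) (auto intro: sum.cong)
  thus ?thesis using zero_notin_B by simp
qed

lemma info_set_rm_code_2: "info_set Fq (rm_code q m (m * (q - 1) - 2)) (UNIV - insert 0 B)"
proof -
  let ?J = "UNIV - insert 0 B"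
  show ?thesis
  proof (rule info_setI[OF is_subfield_Fq finite])
    fix f :: "'b \<Rightarrow> 'b" assume f: "\<forall>x\<in>?J. f x \<in> Fq"
    \<comment> \<open>prescribe \<open>f\<close> on \<open>J\<close>, then solve the two check equations on \<open>B\<close> and at \<open>0\<close>\<close>
    obtain g where g: "\<forall>b\<in>B. g b \<in> Fq" "- (\<Sum>x\<in>?J. f x * x) = (\<Sum>b\<in>B. g b * b)"
      using B_spans by blast
    define c0 where "c0 = - ((\<Sum>x\<in>?J. f x) + (\<Sum>b\<in>B. g b))"
    define c where "c x = (if x \<in> ?J then f x else if x \<in> B then g x else c0)" for x
    have "c0 \<in> Fq" unfolding c0_def using f g(1) by (intro Fq_uminus Fq_add Fq_sum) auto
    hence "c \<in> words q" using f g(1) by (simp add: mem_words_iff c_def)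
    moreover have "c 0 = c0" using zero_notin_B by (simp add: c_def)
    moreover have "(\<Sum>x\<in>B. c x) = (\<Sum>x\<in>B. g x)" "(\<Sum>x\<in>B. c x * x) = (\<Sum>x\<in>B. g x * x)"
      "(\<Sum>x\<in>?J. c x) = (\<Sum>x\<in>?J. f x)" "(\<Sum>x\<in>?J. c x * x) = (\<Sum>x\<in>?J. f x * x)"
      by (auto simp: c_def intro: sum.cong)
    ultimately have "c \<in> rm_code q m (m * (q - 1) - 2)"
      unfolding mem_rm_code_2_iff using sum_UNIV_split[of c] sum_UNIV_split[of "\<lambda>x. c x * x"] g(2)[symmetric]
      by (simp add: c0_def)
    moreover have "\<forall>x\<in>?J. c x = f x" by (simp add: c_def)
    ultimately show "\<exists>c\<in>rm_code q m (m * (q - 1) - 2). \<forall>x\<in>?J. c x = f x" by blast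
  next
    fix c :: "'b \<Rightarrow> 'b" assume c: "c \<in> rm_code q m (m * (q - 1) - 2)" "\<forall>x\<in>?J. c x = 0"
    have sums: "c \<in> words q" "(\<Sum>x\<in>UNIV. c x) = 0" "(\<Sum>x\<in>UNIV. c x * x) = 0"
      using c(1) mem_rm_code_2_iff by blast+
    have "(\<Sum>x\<in>B. c x * x) = 0"
      using sum_UNIV_split[of "\<lambda>x. c x * x"] sums(3) c(2) by simp
    hence "\<forall>b\<in>B. c b = 0" using B_independent sums(1) by (simp add: mem_words_iff)
    moreover from this have "c 0 = 0" using sum_UNIV_split[of c] sums(2) c(2) by simp
    ultimately show "\<forall>x. c x = 0" using c(2) by (metis DiffI UNIV_I insertE)
  qed (auto intro: rm_code_lin_closed rm_code_in_Fq)
qed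

end

section \<open>A basis of products of powers\<close>

context field_with_primitive_element
begin

lemma coprime_of_dvd_n: "r dvd n \<Longrightarrow> coprime r q"
  using lucas_coprime_lemma[of m q r] m_pos n_def q_ge_2
  by (simp add: cong_altdef_nat dvd_trans coprime_commute)

lemma power_q_power_mult_fixed: "(x::'b) ^ (q ^ t) = x \<Longrightarrow> x ^ (q ^ (t * k)) = x"
  by (induction k) (simp_all add: power_add power_mult)

lemma frobenius_vandermonde_zero:
  fixes c :: "nat \<Rightarrow> 'b"
  assumes fixed: "\<And>j. j < D \<Longrightarrow> c j ^ (q ^ t) = c j"
    and distinct: "inj_on (\<lambda>k. z ^ (q ^ (t * k))) {..<D}"
    and zero: "(\<Sum>j<D. c j * z ^ j) = 0"
  shows "\<forall>j<D. c j = 0"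
proof (rule vandermonde_zero[OF distinct], intro allI impI)
  fix k
  have "(\<Sum>j<D. c j * z ^ j) ^ (q ^ (t * k)) = (\<Sum>j<D. c j ^ (q ^ (t * k)) * (z ^ j) ^ (q ^ (t * k)))"
    by (rule frobenius_sum_mult)
  also have "\<dots> = (\<Sum>j<D. c j * (z ^ (q ^ (t * k))) ^ j)"
    using power_q_power_mult_fixed[OF fixed]
    by (intro sum.cong) (simp_all flip: power_mult add: mult.commute[of _ "q ^ (t * k)"])
  finally have "(\<Sum>j<D. c j * (z ^ (q ^ (t * k))) ^ j) = (\<Sum>j<D. c j * z ^ j) ^ (q ^ (t * k))" ..
  thus "(\<Sum>j<D. c j * (z ^ (q ^ (t * k))) ^ j) = 0" using zero q_ge_2 by simp
qed

lemma power_q_power_eq_imp_cong: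
  fixes \<gamma> :: 'b
  assumes order: "\<And>s. \<gamma> ^ s = 1 \<longleftrightarrow> r dvd s" and "r dvd n"
    and eq: "\<gamma> ^ (q ^ i) = \<gamma> ^ (q ^ j)" and "i \<le> j"
  shows "[q ^ (j - i) = 1] (mod r)"
proof -
  have "\<gamma> \<noteq> 0" using order[of n] \<open>r dvd n\<close> n_gt_1 by (auto simp: power_0_left)
  have "q ^ i \<le> q ^ j" using \<open>i \<le> j\<close> q_ge_2 by simp
  hence "\<gamma> ^ (q ^ i) * \<gamma> ^ (q ^ j - q ^ i) = \<gamma> ^ (q ^ j)"
    by (simp flip: power_add)
  hence "\<gamma> ^ (q ^ i) * \<gamma> ^ (q ^ j - q ^ i) = \<gamma> ^ (q ^ i) * 1"
    using eq by simp
  hence "r dvd q ^ j - q ^ i" using \<open>\<gamma> \<noteq> 0\<close> order by simp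
  moreover have "q ^ j - q ^ i = q ^ i * (q ^ (j - i) - 1)"
    using \<open>i \<le> j\<close> by (simp add: diff_mult_distrib2 flip: power_add)
  moreover have "coprime r (q ^ i)" using coprime_of_dvd_n[OF \<open>r dvd n\<close>] by simp
  ultimately have "r dvd q ^ (j - i) - 1" using coprime_dvd_mult_right_iff by metis
  thus ?thesis using q_ge_2 by (simp add: cong_altdef_nat)
qed

lemma ord_pos_and_dvd_m:
  assumes "r dvd n"
  shows "0 < ord r q" "ord r q dvd m"
proof -
  show "0 < ord r q" using coprime_of_dvd_n[OF assms] by simp
  have "[q ^ m = 1] (mod r)"
    using assms n_def q_ge_2 by (simp add: cong_altdef_nat)
  thus "ord r q dvd m" using ord_divides by blast
qed

lemma inj_on_conjugates:
  fixes \<gamma> :: 'b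
  assumes order: "\<And>s. \<gamma> ^ s = 1 \<longleftrightarrow> r dvd s" and "r dvd n"
  shows "inj_on (\<lambda>k. \<gamma> ^ (q ^ k)) {..<ord r q}"
proof -
  have False if "i < j" "j < ord r q" "\<gamma> ^ (q ^ i) = \<gamma> ^ (q ^ j)" for i j
  proof -
    have "0 < j - i" "j - i < ord r q" using that by auto
    thus False using power_q_power_eq_imp_cong[OF order \<open>r dvd n\<close> that(3)] ord_minimal that(1)
      by auto
  qed
  thus ?thesis by (intro inj_onI) (metis lessThan_iff linorder_cases)
qed

lemma inj_on_conjugates_ord_step:
  fixes \<gamma> :: 'b
  assumes "n = r1 * r2" "coprime r1 r2" and a_def: "a = ord r1 q"
    and order: "\<And>s. \<gamma> ^ s = 1 \<longleftrightarrow> r2 dvd s"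
  shows "inj_on (\<lambda>k. \<gamma> ^ (q ^ (a * k))) {..<m div a}"
proof -
  have "r1 dvd n" "r2 dvd n" using assms(1) by simp_all
  have "a > 0" "a dvd m" using ord_pos_and_dvd_m[OF \<open>r1 dvd n\<close>] a_def by simp_all
  \<comment> \<open>a coincidence forces \<open>q\<^bsup>a(j-i)\<^esup> \<equiv> 1\<close> modulo \<open>r2\<close>, and also modulo \<open>r1\<close>, hence modulo \<open>n\<close>\<close>
  have False if ij: "i < j" "j < m div a" "\<gamma> ^ (q ^ (a * i)) = \<gamma> ^ (q ^ (a * j))" for i j
  proof -
    let ?e = "a * (j - i)"
    have "[q ^ ?e = 1] (mod r2)"
      using power_q_power_eq_imp_cong[OF order \<open>r2 dvd n\<close> ij(3)] ij(1)
      by (simp add: diff_mult_distrib2)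
    moreover have "[q ^ ?e = 1] (mod r1)"
      using ord_divides[of q ?e r1] a_def by simp
    ultimately have "[q ^ ?e = 1] (mod n)"
      using assms(1,2) coprime_cong_mult_nat by simp
    hence "n dvd q ^ ?e - 1" using q_ge_2 by (simp add: cong_altdef_nat)
    moreover have "0 < ?e" using ij \<open>a > 0\<close> by simp
    hence "1 < q ^ ?e" using q_ge_2 by (intro one_less_power) auto
    hence "0 < q ^ ?e - 1" by simp
    ultimately have "n \<le> q ^ ?e - 1" by (rule dvd_imp_le)
    hence "q ^ m \<le> q ^ ?e" using Suc_n \<open>1 < q ^ ?e\<close> by linarith
    hence "m \<le> ?e" using q_ge_2 by simp
    moreover have "?e < a * (m div a)" using ij \<open>a > 0\<close> by simp
    ultimately show False using \<open>a dvd m\<close> by simp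
  qed
  thus ?thesis by (intro inj_onI) (metis lessThan_iff linorder_cases)
qed

lemma power_q_power_ord_fixed:
  fixes \<gamma> :: 'b
  assumes order: "\<And>s. \<gamma> ^ s = 1 \<longleftrightarrow> r dvd s"
  shows "\<gamma> ^ (q ^ ord r q) = \<gamma>"
proof -
  have "[q ^ ord r q = 1] (mod r)" using ord_works by blast
  hence "\<gamma> ^ (q ^ ord r q - 1) = 1" using order cong_to_1_nat by blast
  moreover have "q ^ ord r q = Suc (q ^ ord r q - 1)" using q_ge_2 by simp
  ultimately show ?thesis by (metis power_Suc mult_1_right)
qed

lemma power_products_independent:
  fixes \<gamma>1 \<gamma>2 :: 'b and g :: "nat \<times> nat \<Rightarrow> 'b"
  assumes "n = r1 * r2" "coprime r1 r2" and a_def: "a = ord r1 q"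
    and order1: "\<And>s. \<gamma>1 ^ s = 1 \<longleftrightarrow> r1 dvd s" and order2: "\<And>s. \<gamma>2 ^ s = 1 \<longleftrightarrow> r2 dvd s"
    and g_Fq: "\<forall>i\<in>{..<a} \<times> {..<m div a}. g i \<in> Fq"
    and zero: "(\<Sum>i\<in>{..<a} \<times> {..<m div a}. g i * (\<gamma>1 ^ fst i * \<gamma>2 ^ snd i)) = 0"
  shows "\<forall>i\<in>{..<a} \<times> {..<m div a}. g i = 0"
proof -
  define d where "d = m div a"
  have "r1 dvd n" using assms(1) by simp
  have "\<gamma>1 ^ (q ^ a) = \<gamma>1" using power_q_power_ord_fixed[OF order1] a_def by simp
  define c where "c j = (\<Sum>i<a. g (i, j) * \<gamma>1 ^ i)" for j
  have c_fixed: "c j ^ (q ^ a) = c j" if "j < d" for j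
  proof -
    have "c j ^ (q ^ a) = (\<Sum>i<a. g (i, j) ^ (q ^ a) * (\<gamma>1 ^ (q ^ a)) ^ i)"
      unfolding c_def by (simp add: frobenius_sum_mult mult.commute flip: power_mult)
    also have "\<dots> = c j"
      using g_Fq that \<open>\<gamma>1 ^ (q ^ a) = \<gamma>1\<close> by (auto simp: c_def d_def Fq_power_q_power intro: sum.cong)
    finally show ?thesis .
  qed
  have "(\<Sum>j<d. c j * \<gamma>2 ^ j) = (\<Sum>j<d. \<Sum>i<a. g (i, j) * (\<gamma>1 ^ i * \<gamma>2 ^ j))"
    unfolding c_def by (simp add: sum_distrib_right mult.assoc)
  also have "\<dots> = (\<Sum>i\<in>{..<a} \<times> {..<d}. g i * (\<gamma>1 ^ fst i * \<gamma>2 ^ snd i))"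
    by (subst sum.swap) (simp add: sum.cartesian_product split_def)
  finally have "(\<Sum>j<d. c j * \<gamma>2 ^ j) = 0" using zero d_def by simp
  hence c_zero: "\<forall>j<d. c j = 0"
    using inj_on_conjugates_ord_step[OF assms(1-3) order2] c_fixed unfolding d_def
    by (intro frobenius_vandermonde_zero[where t = a]) auto
  have "\<forall>i<a. g (i, j) = 0" if "j < d" for j
  proof (rule frobenius_vandermonde_zero[where t = 1])
    show "g (i, j) ^ (q ^ 1) = g (i, j)" if "i < a" for i
      using g_Fq \<open>i < a\<close> \<open>j < d\<close> by (simp add: d_def mem_Fq_iff)
    show "inj_on (\<lambda>k. \<gamma>1 ^ (q ^ (1 * k))) {..<a}"
      using inj_on_conjugates[OF order1 \<open>r1 dvd n\<close>] a_def by simp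
    show "(\<Sum>i<a. g (i, j) * \<gamma>1 ^ i) = 0"
      using c_zero that unfolding c_def by blast
  qed
  thus ?thesis by (auto simp: d_def)
qed

lemma Fq_independent_imp_inj_on:
  fixes v :: "'i \<Rightarrow> 'b"
  assumes indep: "\<And>g. \<forall>i\<in>I. g i \<in> Fq \<Longrightarrow> (\<Sum>i\<in>I. g i * v i) = 0 \<Longrightarrow> \<forall>i\<in>I. g i = 0"
    and "finite I"
  shows "inj_on v I"
proof (rule inj_onI, rule ccontr)
  fix x y assume xy: "x \<in> I" "y \<in> I" "v x = v y" "x \<noteq> y"
  define g :: "'i \<Rightarrow> 'b" where "g i = (if i = x then 1 else if i = y then - 1 else 0)" for i
  have "(\<Sum>i\<in>I. g i * v i) = (\<Sum>i\<in>I. (if i = x then v x else 0) - (if i = y then v y else 0))"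
    by (rule sum.cong) (auto simp: g_def xy(4))
  also have "\<dots> = 0" using xy \<open>finite I\<close> by (simp add: sum_subtractf)
  finally have "\<forall>i\<in>I. g i = 0"
    by (intro indep) (auto simp: g_def Fq_0 Fq_1 Fq_uminus)
  hence "g x = 0" using xy(1) by blast
  thus False by (simp add: g_def)
qed

lemma Fq_basis_power_products:
  fixes \<gamma>1 \<gamma>2 :: 'b
  assumes "n = r1 * r2" "coprime r1 r2" and a_def: "a = ord r1 q"
    and order1: "\<And>s. \<gamma>1 ^ s = 1 \<longleftrightarrow> r1 dvd s" and order2: "\<And>s. \<gamma>2 ^ s = 1 \<longleftrightarrow> r2 dvd s"
  shows "Fq_basis q m n \<alpha> ((\<lambda>i. \<gamma>1 ^ fst i * \<gamma>2 ^ snd i) `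
           {(i1, i2). i1 < r1 \<and> i2 < r2 \<and> i1 < a \<and> i2 * a < m})"
proof -
  define v where "v i = \<gamma>1 ^ fst i * \<gamma>2 ^ snd i" for i
  define \<Gamma>0 where "\<Gamma>0 = {..<a} \<times> {..<m div a}"
  have "0 < a" "a dvd m" using ord_pos_and_dvd_m[of r1] assms(1) a_def by simp_all
  hence "a * (m div a) = m" by simp
  hence "0 < m div a" using m_pos by (metis mult_0_right neq0_conv)
  have indep: "\<forall>i\<in>\<Gamma>0. g i = 0" if "\<forall>i\<in>\<Gamma>0. g i \<in> Fq" "(\<Sum>i\<in>\<Gamma>0. g i * v i) = 0" for g
    using power_products_independent[OF assms] that unfolding \<Gamma>0_def v_def by blast
  hence inj: "inj_on v \<Gamma>0" by (intro Fq_independent_imp_inj_on) (auto simp: \<Gamma>0_def)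
  \<comment> \<open>\<open>\<gamma>1\<^bsup>r1\<^esup> = \<gamma>2\<^bsup>r2\<^esup> = 1\<close>, so \<open>\<Gamma>0\<close> already lies in \<open>{..<r1} \<times> {..<r2}\<close>\<close>
  have "v (r1, 0) = v (0, 0)" "v (0, r2) = v (0, 0)"
    using order1[of r1] order2[of r2] by (simp_all add: v_def)
  moreover have "r1 \<noteq> 0" "r2 \<noteq> 0" using assms(1) n_gt_1 by (auto intro!: gr0I)
  ultimately have "a \<le> r1" "m div a \<le> r2"
    using inj_onD[OF inj, of "(r1, 0)" "(0, 0)"] inj_onD[OF inj, of "(0, r2)" "(0, 0)"]
      \<open>0 < a\<close> \<open>0 < m div a\<close> by (auto simp: \<Gamma>0_def not_less[symmetric])
  have div_iff: "i2 * a < m \<longleftrightarrow> i2 < m div a" for i2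
  proof -
    have "i2 * a < m \<longleftrightarrow> a * i2 < a * (m div a)"
      using \<open>a * (m div a) = m\<close> by (simp add: mult.commute)
    thus ?thesis using \<open>0 < a\<close> by simp
  qed
  have \<Gamma>_eq: "{(i1, i2). i1 < r1 \<and> i2 < r2 \<and> i1 < a \<and> i2 * a < m} = \<Gamma>0"
    using \<open>a \<le> r1\<close> \<open>m div a \<le> r2\<close> by (auto simp: \<Gamma>0_def div_iff)
  show ?thesis
    unfolding \<Gamma>_eq v_def[symmetric]
  proof unfold_locales
    show "card (v ` \<Gamma>0) = m"
      using card_image[OF inj] \<open>a * (m div a) = m\<close> by (simp add: \<Gamma>0_def)
    fix g assume "\<forall>b\<in>v ` \<Gamma>0. g b \<in> Fq" "(\<Sum>b\<in>v ` \<Gamma>0. g b * b) = 0"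
    hence "\<forall>i\<in>\<Gamma>0. g (v i) = 0"
      by (intro indep) (simp_all add: sum.reindex[OF inj])
    thus "\<forall>b\<in>v ` \<Gamma>0. g b = 0" by blast
  qed
qed

end

section \<open>The isomorphism with the product of cyclic groups\<close>

locale cyclic_product_iso =
  fixes n r1 r2 :: nat and T :: "nat \<Rightarrow> nat \<times> nat"
  assumes r1_gt_1: "r1 > 1" and r2_gt_1: "r2 > 1"
    and T_bij: "bij_betw T {..<n} ({..<r1} \<times> {..<r2})"
    and T_hom: "\<forall>i<n. \<forall>j<n. T ((i + j) mod n) =
                 ((fst (T i) + fst (T j)) mod r1, (snd (T i) + snd (T j)) mod r2)"
begin

lemma T_image: "T ` {..<n} = {..<r1} \<times> {..<r2}" and inj_on_T: "inj_on T {..<n}"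
  using T_bij by (simp_all add: bij_betw_def)

lemma n_pos: "0 < n"
  using T_image r1_gt_1 r2_gt_1 by (cases n) auto

lemma T_0: "T 0 = (0, 0)"
proof -
  have "T 0 \<in> {..<r1} \<times> {..<r2}" using T_image n_pos by auto
  moreover have "T 0 = ((fst (T 0) + fst (T 0)) mod r1, (snd (T 0) + snd (T 0)) mod r2)"
    using T_hom n_pos by (metis add_0 mod_less)
  ultimately show ?thesis
    by (cases "T 0") (auto simp: mod_if split: if_splits)
qed

lemma T_mult:
  assumes "u < n"
  shows "T ((u * t) mod n) = ((fst (T u) * t) mod r1, (snd (T u) * t) mod r2)"
proof (induction t)
  case 0
  thus ?case using T_0 by simp
next
  case (Suc t)
  have "(u * Suc t) mod n = ((u * t) mod n + u) mod n" by (simp add: mod_add_right_eq add.commute)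
  hence "T ((u * Suc t) mod n) = ((fst (T ((u * t) mod n)) + fst (T u)) mod r1,
                                  (snd (T ((u * t) mod n)) + snd (T u)) mod r2)"
    using T_hom assms n_pos by simp
  thus ?case using Suc.IH by (simp add: mod_add_right_eq add.commute)
qed

definition e1 :: nat where "e1 = inv_into {..<n} T (1, 0)"
definition e2 :: nat where "e2 = inv_into {..<n} T (0, 1)"

lemma e1: "e1 < n" "T e1 = (1, 0)" and e2: "e2 < n" "T e2 = (0, 1)"
  using T_image r1_gt_1 r2_gt_1 inv_into_into[of _ T "{..<n}"] f_inv_into_f[of _ T "{..<n}"]
  unfolding e1_def e2_def by auto

lemma T_eq_0_iff: "i < n \<Longrightarrow> T i = (0, 0) \<longleftrightarrow> i = 0"
  using inj_onD[OF inj_on_T, of i 0] T_0 n_pos by auto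

lemma e1_mult_mod_eq_0_iff: "(e1 * t) mod n = 0 \<longleftrightarrow> r1 dvd t"
  using T_eq_0_iff[of "(e1 * t) mod n"] T_mult[OF e1(1), of t] e1(2) n_pos
  by (simp add: dvd_eq_mod_eq_0)

lemma e2_mult_mod_eq_0_iff: "(e2 * t) mod n = 0 \<longleftrightarrow> r2 dvd t"
  using T_eq_0_iff[of "(e2 * t) mod n"] T_mult[OF e2(1), of t] e2(2) n_pos
  by (simp add: dvd_eq_mod_eq_0)

lemma T_decomp:
  assumes "i < n"
  shows "(e1 * fst (T i) + e2 * snd (T i)) mod n = i"
proof (rule inj_onD[OF inj_on_T])
  have "T i \<in> {..<r1} \<times> {..<r2}" using T_image assms by auto
  moreover have "(e1 * fst (T i) + e2 * snd (T i)) mod n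
      = ((e1 * fst (T i)) mod n + (e2 * snd (T i)) mod n) mod n"
    by (simp add: mod_add_eq)
  ultimately show "T ((e1 * fst (T i) + e2 * snd (T i)) mod n) = T i"
    using T_hom T_mult[OF e1(1)] T_mult[OF e2(1)] e1(2) e2(2) n_pos
    by (cases "T i") auto
qed (use assms n_pos in auto)

lemma power_decomp:
  fixes x :: "'a::monoid_mult"
  assumes "x ^ n = 1" "i < n"
  shows "x ^ i = (x ^ e1) ^ fst (T i) * (x ^ e2) ^ snd (T i)"
proof -
  let ?k = "e1 * fst (T i) + e2 * snd (T i)"
  have "x ^ ?k = (x ^ n) ^ (?k div n) * x ^ (?k mod n)"
    by (simp flip: power_mult power_add)
  thus ?thesis using assms T_decomp by (simp add: power_add power_mult)
qed

lemma power_e1_eq_1_iff: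
  fixes x :: "'a::monoid_mult"
  assumes "\<And>s. x ^ s = 1 \<longleftrightarrow> n dvd s"
  shows "(x ^ e1) ^ s = 1 \<longleftrightarrow> r1 dvd s"
  using assms e1_mult_mod_eq_0_iff by (simp add: dvd_eq_mod_eq_0 flip: power_mult)

lemma power_e2_eq_1_iff:
  fixes x :: "'a::monoid_mult"
  assumes "\<And>s. x ^ s = 1 \<longleftrightarrow> n dvd s"
  shows "(x ^ e2) ^ s = 1 \<longleftrightarrow> r2 dvd s"
  using assms e2_mult_mod_eq_0_iff by (simp add: dvd_eq_mod_eq_0 flip: power_mult)

lemma powers_over_preimage:
  fixes x :: "'a::monoid_mult"
  assumes "x ^ n = 1" "G \<subseteq> {..<r1} \<times> {..<r2}"
  shows "{x ^ i | i. i < n \<and> T i \<in> G} = (\<lambda>i. (x ^ e1) ^ fst i * (x ^ e2) ^ snd i) ` G"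
proof -
  have "{x ^ i | i. i < n \<and> T i \<in> G} = (\<lambda>i. (x ^ e1) ^ fst i * (x ^ e2) ^ snd i) ` T ` {i \<in> {..<n}. T i \<in> G}"
    unfolding setcompr_eq_image image_image using power_decomp[OF assms(1)] by (intro image_cong) auto
  also have "T ` {i \<in> {..<n}. T i \<in> G} = T ` {..<n} \<inter> G"
    by blast
  also have "\<dots> = G"
    using T_image assms(2) by blast
  finally show ?thesis .
qed

end

theorem mainTheorem2:
  fixes q m n r1 r2 a :: nat
    and \<alpha> :: "'b::{finite,field}"
    and T :: "nat \<Rightarrow> nat \<times> nat"
  assumes q_pp: "\<exists>p e. prime p \<and> e \<ge> 1 \<and> q = p ^ e"
    and m_pos: "m \<ge> 1"
    and card_field: "card (UNIV :: 'b set) = q ^ m"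
    and n_def: "n = q ^ m - 1"
    and n_fact: "n = r1 * r2"
    and r1_gt: "r1 > 1" and r2_gt: "r2 > 1"
    and cop: "coprime r1 r2"
    and a_def: "a = ord r1 q"
    and gen: "\<alpha> \<noteq> 0" "\<forall>x::'b. x \<noteq> 0 \<longrightarrow> (\<exists>i. x = \<alpha> ^ i)"
    and T_bij: "bij_betw T {..<n} ({..<r1} \<times> {..<r2})"
    and T_hom: "\<forall>i<n. \<forall>j<n. T ((i + j) mod n) =
                 ((fst (T i) + fst (T j)) mod r1, (snd (T i) + snd (T j)) mod r2)"
  defines "\<Gamma> \<equiv> {(i1, i2). i1 < r1 \<and> i2 < r2 \<and> i1 < a \<and> i2 * a < m}"
  shows "info_set (subfield_Fq q) (rm_code q m 1)
           (insert 0 {\<alpha> ^ i | i. i < n \<and> T i \<in> \<Gamma>})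
       \<and> info_set (subfield_Fq q) (rm_code q m (m * (q - 1) - 2))
           {\<alpha> ^ i | i. i < n \<and> T i \<notin> \<Gamma>}"
proof -
  have "n > 1" using n_fact r1_gt r2_gt less_1_mult by blast
  interpret F: field_with_primitive_element q m n \<alpha>
    using q_pp card_field n_def \<open>n > 1\<close> gen by unfold_locales
  interpret iso: cyclic_product_iso n r1 r2 T
    using r1_gt r2_gt T_bij T_hom by unfold_locales
  define \<gamma>1 \<gamma>2 where "\<gamma>1 = \<alpha> ^ iso.e1" and "\<gamma>2 = \<alpha> ^ iso.e2"
  have B_eq: "{\<alpha> ^ i | i. i < n \<and> T i \<in> \<Gamma>} = (\<lambda>i. \<gamma>1 ^ fst i * \<gamma>2 ^ snd i) ` \<Gamma>"
    unfolding \<gamma>1_def \<gamma>2_def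
    by (rule iso.powers_over_preimage) (auto simp: F.nonzero_power_n gen(1) \<Gamma>_def)
  have order: "\<gamma>1 ^ s = 1 \<longleftrightarrow> r1 dvd s" "\<gamma>2 ^ s = 1 \<longleftrightarrow> r2 dvd s" for s
    unfolding \<gamma>1_def \<gamma>2_def using F.alpha_power_eq_1_iff
    by (rule iso.power_e1_eq_1_iff, rule iso.power_e2_eq_1_iff)
  interpret B: Fq_basis q m n \<alpha> "{\<alpha> ^ i | i. i < n \<and> T i \<in> \<Gamma>}"
    unfolding B_eq by (unfold \<Gamma>_def) (rule F.Fq_basis_power_products[OF n_fact cop a_def order])
  show ?thesis
    using B.info_set_rm_code_1 B.info_set_rm_code_2 F.alpha_powers_Compl[of "\<lambda>i. T i \<in> \<Gamma>"]
    by simp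
qed

end
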